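(* Let $(F,\|\cdot\|)$ be a normed space, $(a_{ij})_{i,j\le n}$ a symmetric matrix with entries in $F$, $g_1,\dots,g_n$ i.i.d. $\mathcal N(0,1)$ random variables, and $p\ge1$. Let $W= \|\sum_{i\neq j}a_{ij}g_ig_j\|_p+\|\sum_{i}a_{ii}(g_i^2-1)\|_p$. Then \[ \frac{1}{3}W \leq \Big\|\sum_{i,j}a_{ij}(g_ig_j-\delta_{ij})\Big\|_p \leq W. \]
   Context: For an $F$-valued random variable $Z$, $\|Z\|_p=(\mathbb{E}\|Z\|^p)^{1/p}$. $\delta_{ij}$ is the Kronecker delta; sums run over $\{1,\dots,n\}$. *)

theory Defs
  imports "HOL-Probability.Probability"
begin

definition Lp_norm :: "'b measure \<Rightarrow> real \<Rightarrow> ('b \<Rightarrow> 'a::real_normed_vector) \<Rightarrow> real" where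
  "Lp_norm M p Z = (\<integral>x. norm (Z x) powr p \<partial>M) powr (1 / p)"

end

theory Submission
  imports Defs
begin

text \<open>
  Split the Wick-ordered chaos \<open>S = \<Sum>\<^sub>i\<^sub>j a\<^sub>i\<^sub>j (g\<^sub>i g\<^sub>j - \<delta>\<^sub>i\<^sub>j)\<close> into its off-diagonal
  part \<open>O\<close> and its diagonal part \<open>D\<close>. The upper bound \<open>\<parallel>S\<parallel>\<^sub>p \<le> \<parallel>O\<parallel>\<^sub>p + \<parallel>D\<parallel>\<^sub>p\<close> is
  Minkowski's inequality. For the lower bound, flip signs: averaging \<open>S(\<epsilon>g)\<close> over all \<open>2\<^sup>n\<close>
  sign vectors \<open>\<epsilon>\<close> cancels every off-diagonal term and leaves \<open>D(g)\<close>, while \<open>\<epsilon>g\<close> has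
  the same law as \<open>g\<close>; by convexity of \<open>t \<mapsto> t\<^sup>p\<close> this gives \<open>\<parallel>D\<parallel>\<^sub>p \<le> \<parallel>S\<parallel>\<^sub>p\<close>.
  Then \<open>\<parallel>O\<parallel>\<^sub>p \<le> \<parallel>S\<parallel>\<^sub>p + \<parallel>D\<parallel>\<^sub>p \<le> 2\<parallel>S\<parallel>\<^sub>p\<close>, so \<open>W \<le> 3\<parallel>S\<parallel>\<^sub>p\<close>.
\<close>

section \<open>Inequalities for real powers\<close>

lemma convex_on_powr_nonneg:
  assumes "p \<ge> 1"
  shows "convex_on {0..} (\<lambda>x::real. x powr p)"
proof (rule convex_onI)
  have scaled_le: "(s * z) powr p \<le> s * z powr p" if "0 \<le> s" "s \<le> 1" "0 \<le> z" for s z :: real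
  proof -
    have "s powr p \<le> s powr 1"
      using that assms by (intro powr_mono') auto
    then show ?thesis
      using that by (simp add: powr_mult mult_right_mono)
  qed
  fix t x y :: real
  assume t: "0 < t" "t < 1" and xy: "x \<in> {0..}" "y \<in> {0..}"
  show "((1 - t) *\<^sub>R x + t *\<^sub>R y) powr p \<le> (1 - t) * x powr p + t * y powr p"
  proof (cases "x = 0 \<or> y = 0")
    case True
    then show ?thesis
      using t xy scaled_le[of t y] scaled_le[of "1 - t" x] by auto
  next
    case False
    with xy have "x \<in> {0<..}" "y \<in> {0<..}" by auto
    then show ?thesis
      using convex_onD[OF powr_convex[OF assms]] t by simp
  qed
qed auto

lemma powr_average_le:
  fixes z :: "'i \<Rightarrow> real"
  assumes "finite K" "K \<noteq> {}" "p \<ge> 1" "\<And>k. k \<in> K \<Longrightarrow> z k \<ge> 0"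
  shows "((\<Sum>k\<in>K. z k) / card K) powr p \<le> (\<Sum>k\<in>K. z k powr p) / card K"
  using convex_on_sum[OF assms(1,2) convex_on_powr_nonneg[OF assms(3)], of "\<lambda>_. 1 / card K" z]
    assms by (simp add: sum_divide_distrib card_gt_0_iff)

lemma one_plus_sum_powr_le:
  fixes z :: "'i \<Rightarrow> real"
  assumes "finite I" "p \<ge> 1" "\<And>i. i \<in> I \<Longrightarrow> z i \<ge> 0"
  shows "(1 + (\<Sum>i\<in>I. z i)) powr p \<le> (card I + 1) powr (p - 1) * (1 + (\<Sum>i\<in>I. z i powr p))"
proof -
  \<comment> \<open>Jensen on \<open>I\<close> extended by one point \<open>None\<close> carrying the summand \<open>1\<close>.\<close>
  define K where "K = insert None (Some ` I)"
  define z' where "z' = case_option 1 z"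
  have card_K: "card K = card I + 1"
    using assms(1) by (simp add: K_def card_image)
  have sum_K: "(\<Sum>k\<in>K. f (z' k)) = f 1 + (\<Sum>i\<in>I. f (z i))" for f :: "real \<Rightarrow> real"
    using assms(1) by (simp add: K_def z'_def sum.reindex)
  have "((\<Sum>k\<in>K. z' k) / card K) powr p \<le> (\<Sum>k\<in>K. z' k powr p) / card K"
    using assms by (intro powr_average_le) (auto simp: K_def z'_def)
  then have "((1 + (\<Sum>i\<in>I. z i)) / (card I + 1)) powr p \<le> (1 + (\<Sum>i\<in>I. z i powr p)) / (card I + 1)"
    using sum_K[of "\<lambda>x. x"] sum_K[of "\<lambda>x. x powr p"] card_K by simp
  then show ?thesis
    using assms by (simp add: powr_divide sum_nonneg powr_diff field_simps)
qed

lemma add_powr_le_weighted: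
  fixes u v A B p :: real
  assumes p: "p \<ge> 1" and uv: "u \<ge> 0" "v \<ge> 0" and AB: "A > 0" "B > 0"
  shows "(u + v) powr p \<le> (A + B) powr (p - 1) * (u powr p / A powr (p - 1) + v powr p / B powr (p - 1))"
proof -
  define t where "t = B / (A + B)"
  have t: "0 \<le> t" "t \<le> 1" "1 - t = A / (A + B)"
    using AB by (auto simp: t_def field_simps)
  have "(u + v) / (A + B) = (1 - t) *\<^sub>R (u / A) + t *\<^sub>R (v / B)"
    using AB unfolding t(3) by (simp add: t_def add_divide_distrib)
  also have "\<dots> powr p \<le> (1 - t) * (u / A) powr p + t * (v / B) powr p"
    using convex_onD[OF convex_on_powr_nonneg[OF p] t(1,2), of "u / A" "v / B"] uv AB by simp
  finally have "((u + v) / (A + B)) powr p \<le> A / (A + B) * (u / A) powr p + B / (A + B) * (v / B) powr p"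
    unfolding t(3) by (simp add: t_def)
  then have "(u + v) powr p \<le> (A + B) powr p * (A / (A + B) * (u / A) powr p + B / (A + B) * (v / B) powr p)"
    using AB uv by (simp add: powr_divide pos_divide_le_eq mult.commute)
  also have "\<dots> = (A + B) powr (p - 1) * (u powr p / A powr (p - 1) + v powr p / B powr (p - 1))"
  proof -
    have "(A + B) powr p * (C / (A + B) * (w / C) powr p) = (A + B) powr (p - 1) * (w powr p / C powr (p - 1))"
      if "C > 0" "w \<ge> 0" for C w :: real
      using that AB by (simp add: powr_divide powr_diff)
    then show ?thesis
      using AB uv by (simp add: distrib_left)
  qed
  finally show ?thesis .
qed

lemma abs_powr_le_one_plus_even_power:
  fixes y q :: real
  assumes "q \<ge> 0"
  shows "\<bar>y\<bar> powr q \<le> 1 + y ^ (2 * nat \<lceil>q\<rceil>)"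
proof (cases "\<bar>y\<bar> \<le> 1")
  case True
  then have "\<bar>y\<bar> powr q \<le> 1"
    using assms by (cases "y = 0") (auto intro: powr_le1)
  then show ?thesis
    by (simp add: add_increasing2 zero_le_even_power)
next
  case False
  then have "\<bar>y\<bar> powr q \<le> \<bar>y\<bar> powr real (2 * nat \<lceil>q\<rceil>)"
    using assms by (intro powr_mono) linarith+
  also have "\<dots> = \<bar>y\<bar> ^ (2 * nat \<lceil>q\<rceil>)"
    using False by (intro powr_realpow) simp
  also have "\<dots> = y ^ (2 * nat \<lceil>q\<rceil>)"
    by (simp add: power_even_abs)
  finally show ?thesis
    by simp
qed

section \<open>\<open>L\<^sub>p\<close> norms\<close>

lemma Lp_norm_nonneg: "Lp_norm M p X \<ge> 0"
  by (simp add: Lp_norm_def)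

lemma Lp_norm_uminus: "Lp_norm M p (\<lambda>x. - X x) = Lp_norm M p X"
  by (simp add: Lp_norm_def)

lemma Lp_norm_powr:
  assumes "p \<noteq> 0"
  shows "Lp_norm M p X powr p = (\<integral>x. norm (X x) powr p \<partial>M)"
  using assms by (simp add: Lp_norm_def powr_powr integral_nonneg)

lemma Lp_norm_mono_integral:
  assumes "p > 0" and "(\<integral>x. norm (X x) powr p \<partial>M) \<le> (\<integral>x. norm (Y x) powr p \<partial>M)"
  shows "Lp_norm M p X \<le> Lp_norm M p Y"
  using assms by (simp add: Lp_norm_def powr_mono2 integral_nonneg)

text \<open>Integrate \<open>add_powr_le_weighted\<close> with \<open>A\<close>, \<open>B\<close> slightly above the two norms; the slack \<open>e/2\<close> keeps them positive.\<close>

lemma Lp_norm_add_le: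
  fixes X Y :: "'b \<Rightarrow> 'a::real_normed_vector"
  assumes p: "p \<ge> 1"
    and int_X: "integrable M (\<lambda>x. norm (X x) powr p)"
    and int_Y: "integrable M (\<lambda>x. norm (Y x) powr p)"
    and int_XY: "integrable M (\<lambda>x. norm (X x + Y x) powr p)"
  shows "Lp_norm M p (\<lambda>x. X x + Y x) \<le> Lp_norm M p X + Lp_norm M p Y"
proof (rule field_le_epsilon)
  fix e :: real
  assume "e > 0"
  define A where "A = Lp_norm M p X + e / 2"
  define B where "B = Lp_norm M p Y + e / 2"
  have AB: "A > 0" "B > 0"
    using \<open>e > 0\<close> by (auto simp: A_def B_def add_nonneg_pos Lp_norm_nonneg)
  have bound_X: "(\<integral>x. norm (X x) powr p \<partial>M) \<le> A powr p"
    using p \<open>e > 0\<close> by (simp flip: Lp_norm_powr add: A_def powr_mono2 Lp_norm_nonneg)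
  have bound_Y: "(\<integral>x. norm (Y x) powr p \<partial>M) \<le> B powr p"
    using p \<open>e > 0\<close> by (simp flip: Lp_norm_powr add: B_def powr_mono2 Lp_norm_nonneg)
  define c where "c = (A + B) powr (p - 1)"
  have "(\<integral>x. norm (X x + Y x) powr p \<partial>M)
      \<le> (\<integral>x. c * (norm (X x) powr p / A powr (p - 1) + norm (Y x) powr p / B powr (p - 1)) \<partial>M)"
    using int_X int_Y int_XY p AB unfolding c_def
    by (intro integral_mono order_trans[OF powr_mono2 add_powr_le_weighted] norm_triangle_ineq) auto
  also have "\<dots> = c * ((\<integral>x. norm (X x) powr p \<partial>M) / A powr (p - 1) + (\<integral>x. norm (Y x) powr p \<partial>M) / B powr (p - 1))"
    using int_X int_Y by simp
  also have "\<dots> \<le> c * (A powr p / A powr (p - 1) + B powr p / B powr (p - 1))"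
    using bound_X bound_Y by (intro mult_left_mono add_mono divide_right_mono) (auto simp: c_def)
  also have "\<dots> = (A + B) powr p"
    using AB by (simp add: c_def powr_diff field_simps)
  finally have "Lp_norm M p (\<lambda>x. X x + Y x) \<le> ((A + B) powr p) powr (1 / p)"
    unfolding Lp_norm_def using p by (intro powr_mono2) (auto simp: integral_nonneg)
  also have "\<dots> = A + B"
    using AB p by (simp add: powr_powr)
  finally show "Lp_norm M p (\<lambda>x. X x + Y x) \<le> Lp_norm M p X + Lp_norm M p Y + e"
    by (simp add: A_def B_def)
qed

lemma Lp_norm_diff_le:
  fixes X Y :: "'b \<Rightarrow> 'a::real_normed_vector"
  assumes "p \<ge> 1"
    and "integrable M (\<lambda>x. norm (X x) powr p)" "integrable M (\<lambda>x. norm (Y x) powr p)"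
    and "integrable M (\<lambda>x. norm (X x - Y x) powr p)"
  shows "Lp_norm M p (\<lambda>x. X x - Y x) \<le> Lp_norm M p X + Lp_norm M p Y"
  using Lp_norm_add_le[of p M X "\<lambda>x. - Y x"] assms by (simp add: Lp_norm_uminus)

section \<open>Wick-ordered quadratic forms\<close>

text \<open>For independent standard Gaussians, \<open>y\<^sub>i y\<^sub>j - \<delta>\<^sub>i\<^sub>j\<close> is the Wick product of \<open>y\<^sub>i\<close> and \<open>y\<^sub>j\<close>.\<close>

definition wick_form :: "'i set \<Rightarrow> ('i \<Rightarrow> 'i \<Rightarrow> 'a::real_normed_vector) \<Rightarrow> ('i \<Rightarrow> real) \<Rightarrow> 'a" where
  "wick_form I b y = (\<Sum>i\<in>I. \<Sum>j\<in>I. (y i * y j - (if i = j then 1 else 0)) *\<^sub>R b i j)"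

definition diagonal_part :: "('i \<Rightarrow> 'i \<Rightarrow> 'a::zero) \<Rightarrow> 'i \<Rightarrow> 'i \<Rightarrow> 'a" where
  "diagonal_part b i j = (if i = j then b i j else 0)"

definition off_diagonal_part :: "('i \<Rightarrow> 'i \<Rightarrow> 'a::zero) \<Rightarrow> 'i \<Rightarrow> 'i \<Rightarrow> 'a" where
  "off_diagonal_part b i j = (if i = j then 0 else b i j)"

lemma wick_form_diagonal_part:
  assumes "finite I"
  shows "wick_form I (diagonal_part b) y = (\<Sum>i\<in>I. (y i ^ 2 - 1) *\<^sub>R b i i)"
  using assms by (simp add: wick_form_def diagonal_part_def power2_eq_square if_distrib cong: if_cong)

lemma wick_form_off_diagonal_part:
  assumes "finite I"
  shows "wick_form I (off_diagonal_part b) y = (\<Sum>i\<in>I. \<Sum>j\<in>I - {i}. (y i * y j) *\<^sub>R b i j)"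
proof -
  have "(\<Sum>j\<in>I. (y i * y j - (if i = j then 1 else 0)) *\<^sub>R (if i = j then 0 else b i j))
      = (\<Sum>j\<in>I - {i}. (y i * y j) *\<^sub>R b i j)" if "i \<in> I" for i
    using assms that by (simp add: sum.remove[of I i]; intro sum.cong refl; auto)
  then show ?thesis
    by (simp add: wick_form_def off_diagonal_part_def)
qed

lemma wick_form_add:
  "wick_form I (\<lambda>i j. b i j + c i j) y = wick_form I b y + wick_form I c y"
  by (simp add: wick_form_def scaleR_add_right sum.distrib)

lemma wick_form_split:
  "wick_form I b y = wick_form I (off_diagonal_part b) y + wick_form I (diagonal_part b) y"
proof -
  have "b = (\<lambda>i j. off_diagonal_part b i j + diagonal_part b i j)"
    by (simp add: off_diagonal_part_def diagonal_part_def fun_eq_iff)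
  then show ?thesis
    by (metis wick_form_add)
qed

lemma wick_form_restrict: "wick_form I b (restrict y I) = wick_form I b y"
  by (simp add: wick_form_def)

lemma norm_wick_form_le:
  assumes "finite I"
  shows "norm (wick_form I b y) \<le> (\<Sum>i\<in>I. \<Sum>j\<in>I. norm (b i j)) * (1 + (\<Sum>k\<in>I. (y k)\<^sup>2))"
proof -
  have coeff_le: "\<bar>y i * y j - (if i = j then 1 else 0)\<bar> \<le> 1 + (\<Sum>k\<in>I. (y k)\<^sup>2)"
    if "i \<in> I" "j \<in> I" for i j
  proof -
    have "2 * \<bar>y i * y j\<bar> \<le> (y i)\<^sup>2 + (y j)\<^sup>2"
      using sum_squares_bound[of "\<bar>y i\<bar>" "\<bar>y j\<bar>"] by (simp add: abs_mult)
    moreover have "(y i)\<^sup>2 \<le> (\<Sum>k\<in>I. (y k)\<^sup>2)" "(y j)\<^sup>2 \<le> (\<Sum>k\<in>I. (y k)\<^sup>2)"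
      using assms that by (auto intro: member_le_sum)
    ultimately have "\<bar>y i * y j\<bar> \<le> (\<Sum>k\<in>I. (y k)\<^sup>2)"
      by linarith
    then show ?thesis
      using abs_triangle_ineq4[of "y i * y j" "if i = j then 1 else 0"] by (cases "i = j") auto
  qed
  have "norm (wick_form I b y) \<le> (\<Sum>i\<in>I. \<Sum>j\<in>I. norm ((y i * y j - (if i = j then 1 else 0)) *\<^sub>R b i j))"
    unfolding wick_form_def by (intro order_trans[OF norm_sum] sum_mono norm_sum)
  also have "\<dots> \<le> (\<Sum>i\<in>I. \<Sum>j\<in>I. (1 + (\<Sum>k\<in>I. (y k)\<^sup>2)) * norm (b i j))"
    unfolding norm_scaleR by (intro sum_mono mult_right_mono coeff_le norm_ge_zero)
  finally show ?thesis
    by (simp add: sum_distrib_right mult.commute)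
qed

lemma measurable_id_PiM_borel:
  "(\<lambda>y. y) \<in> measurable (Pi\<^sub>M I (\<lambda>_. borel)) (borel :: ('i::countable \<Rightarrow> 'b::second_countable_topology) measure)"
proof (rule measurable_coordinatewise_then_product)
  fix i :: 'i
  show "(\<lambda>y::'i \<Rightarrow> 'b. y i) \<in> borel_measurable (Pi\<^sub>M I (\<lambda>_. borel))"
  proof (cases "i \<in> I")
    case False
    have "(\<lambda>y::'i \<Rightarrow> 'b. y i) \<in> borel_measurable (Pi\<^sub>M I (\<lambda>_. borel)) \<longleftrightarrow>
        (\<lambda>_::'i \<Rightarrow> 'b. undefined :: 'b) \<in> borel_measurable (Pi\<^sub>M I (\<lambda>_. borel))"
      by (intro measurable_cong) (metis False PiE_arb space_PiM)
    then show ?thesis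
      by simp
  qed (rule measurable_component_singleton)
qed

lemma continuous_on_norm_wick_form: "continuous_on UNIV (\<lambda>y. norm (wick_form I b y))"
  unfolding wick_form_def by (intro continuous_intros continuous_on_product_coordinates)

lemma norm_wick_form_measurable:
  fixes I :: "'i::countable set"
  shows "(\<lambda>y. norm (wick_form I b y)) \<in> borel_measurable (Pi\<^sub>M I (\<lambda>_. borel))"
  using measurable_comp[OF measurable_id_PiM_borel borel_measurable_continuous_onI[OF continuous_on_norm_wick_form]]
  by (simp add: comp_def)

text \<open>A sign vector is encoded by the set of indices where it is \<open>-1\<close>.\<close>

definition sign_flip :: "'i set \<Rightarrow> 'i \<Rightarrow> real" where
  "sign_flip A i = (if i \<in> A then -1 else 1)"

lemma sum_sign_flip_mult:
  assumes "finite I" "i \<in> I" "j \<in> I"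
  shows "(\<Sum>A\<in>Pow I. sign_flip A i * sign_flip A j) = (if i = j then 2 ^ card I else 0)"
proof (cases "i = j")
  case True
  have "sign_flip A i * sign_flip A i = 1" for A
    by (simp add: sign_flip_def)
  with True show ?thesis
    using assms by (simp add: card_Pow)
next
  case False
  define toggle where "toggle A = (if i \<in> A then A - {i} else insert i A)" for A
  have "bij_betw toggle (Pow I) (Pow I)"
    by (rule bij_betw_byWitness[where f' = toggle]) (auto simp: toggle_def assms)
  then have "(\<Sum>A\<in>Pow I. sign_flip A i * sign_flip A j) = (\<Sum>A\<in>Pow I. sign_flip (toggle A) i * sign_flip (toggle A) j)"
    using sum.reindex_bij_betw[of toggle "Pow I" "Pow I" "\<lambda>A. sign_flip A i * sign_flip A j"] by simp
  also have "\<dots> = - (\<Sum>A\<in>Pow I. sign_flip A i * sign_flip A j)"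
    unfolding sum_negf[symmetric] using False by (intro sum.cong) (auto simp: toggle_def sign_flip_def)
  finally show ?thesis
    using False by simp
qed

lemma sum_wick_form_sign_flip:
  assumes "finite I"
  shows "(\<Sum>A\<in>Pow I. wick_form I b (\<lambda>i. sign_flip A i * y i)) = 2 ^ card I *\<^sub>R wick_form I (diagonal_part b) y"
proof -
  have coeff: "(\<Sum>A\<in>Pow I. sign_flip A i * y i * (sign_flip A j * y j) - (if i = j then 1 else 0))
      = (if i = j then 2 ^ card I * ((y i)\<^sup>2 - 1) else 0)" if "i \<in> I" "j \<in> I" for i j
  proof (cases "i = j")
    case True
    have "sign_flip A i * y i * (sign_flip A i * y i) = (y i)\<^sup>2" for A
      by (simp add: sign_flip_def power2_eq_square)
    then show ?thesis
      using True assms by (simp add: card_Pow)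
  next
    case False
    have "(\<Sum>A\<in>Pow I. sign_flip A i * y i * (sign_flip A j * y j))
        = (\<Sum>A\<in>Pow I. sign_flip A i * sign_flip A j) * (y i * y j)"
      by (simp add: sum_distrib_left mult_ac)
    then show ?thesis
      using False sum_sign_flip_mult[OF assms that] by simp
  qed
  have "(\<Sum>A\<in>Pow I. wick_form I b (\<lambda>i. sign_flip A i * y i))
      = (\<Sum>i\<in>I. \<Sum>j\<in>I. (\<Sum>A\<in>Pow I. sign_flip A i * y i * (sign_flip A j * y j) - (if i = j then 1 else 0)) *\<^sub>R b i j)"
    unfolding wick_form_def scaleR_sum_left by (subst sum.swap) (simp add: sum.swap[of _ "Pow I"])
  also have "\<dots> = (\<Sum>i\<in>I. \<Sum>j\<in>I. (if i = j then 2 ^ card I * ((y i)\<^sup>2 - 1) else 0) *\<^sub>R b i j)"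
    by (intro sum.cong refl) (simp only: coeff)
  also have "\<dots> = 2 ^ card I *\<^sub>R wick_form I (diagonal_part b) y"
    unfolding wick_form_def diagonal_part_def scaleR_sum_right
    by (intro sum.cong refl) (simp add: power2_eq_square)
  finally show ?thesis .
qed

lemma norm_wick_form_diagonal_part_powr_le:
  assumes "finite I" "p \<ge> 1"
  shows "norm (wick_form I (diagonal_part b) y) powr p
    \<le> (\<Sum>A\<in>Pow I. norm (wick_form I b (\<lambda>i. sign_flip A i * y i)) powr p) / 2 ^ card I"
proof -
  have card: "real (card (Pow I)) = 2 ^ card I"
    using assms by (simp add: card_Pow)
  have "norm (wick_form I (diagonal_part b) y) = norm (\<Sum>A\<in>Pow I. wick_form I b (\<lambda>i. sign_flip A i * y i)) / 2 ^ card I"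
    using assms by (simp add: sum_wick_form_sign_flip)
  also have "\<dots> \<le> (\<Sum>A\<in>Pow I. norm (wick_form I b (\<lambda>i. sign_flip A i * y i))) / 2 ^ card I"
    by (intro divide_right_mono norm_sum) simp
  finally have "norm (wick_form I (diagonal_part b) y) powr p
      \<le> ((\<Sum>A\<in>Pow I. norm (wick_form I b (\<lambda>i. sign_flip A i * y i))) / card (Pow I)) powr p"
    using assms by (simp add: card powr_mono2)
  also have "\<dots> \<le> (\<Sum>A\<in>Pow I. norm (wick_form I b (\<lambda>i. sign_flip A i * y i)) powr p) / card (Pow I)"
    using assms by (intro powr_average_le) auto
  finally show ?thesis
    by (simp add: card)
qed

section \<open>Gaussian vectors\<close>

context prob_space
begin

lemma distr_sign_change_std_normal:
  fixes g :: "'i \<Rightarrow> 'a \<Rightarrow> real"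
  assumes "I \<noteq> {}" and indep: "indep_vars (\<lambda>_. borel) g I"
    and normal: "\<forall>i\<in>I. distributed M lborel (g i) std_normal_density"
    and sign: "\<forall>i\<in>I. \<bar>s i\<bar> = 1"
  shows "distr M (Pi\<^sub>M I (\<lambda>_. borel)) (\<lambda>x. \<lambda>i\<in>I. s i * g i x) = Pi\<^sub>M I (\<lambda>_. density lborel std_normal_density)"
proof -
  have "indep_vars (\<lambda>_. borel) (\<lambda>i x. s i * g i x) I"
    by (rule indep_vars_compose2[OF indep]) simp
  moreover have "(\<lambda>x. s i * g i x) \<in> borel_measurable M" if "i \<in> I" for i
    using distributed_measurable[OF normal[rule_format, OF that]] by simp
  ultimately have "distr M (Pi\<^sub>M I (\<lambda>_. borel)) (\<lambda>x. \<lambda>i\<in>I. s i * g i x)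
      = Pi\<^sub>M I (\<lambda>i. distr M borel (\<lambda>x. s i * g i x))"
    using indep_vars_iff_distr_eq_PiM'[OF \<open>I \<noteq> {}\<close>, where M'="\<lambda>_. borel" and X="\<lambda>i x. s i * g i x"] by simp
  also have "\<dots> = Pi\<^sub>M I (\<lambda>_. density lborel std_normal_density)"
  proof (rule PiM_cong)
    fix i assume "i \<in> I"
    then have "distributed M lborel (\<lambda>x. 0 + s i * g i x) (normal_density (0 + s i * 0) (\<bar>s i\<bar> * 1))"
      using normal sign by (intro normal_density_affine) auto
    then have "distributed M lborel (\<lambda>x. s i * g i x) std_normal_density"
      using sign \<open>i \<in> I\<close> by simp
    then show "distr M borel (\<lambda>x. s i * g i x) = density lborel std_normal_density"
      by (metis distributed_distr_eq_density distr_cong sets_lborel)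
  qed simp
  finally show ?thesis .
qed

lemma integral_sign_change_std_normal:
  fixes g :: "'i \<Rightarrow> 'a \<Rightarrow> real" and h :: "('i \<Rightarrow> real) \<Rightarrow> real"
  assumes indep: "indep_vars (\<lambda>_. borel) g I"
    and normal: "\<forall>i\<in>I. distributed M lborel (g i) std_normal_density"
    and sign: "\<forall>i\<in>I. \<bar>s i\<bar> = 1"
    and h: "h \<in> borel_measurable (Pi\<^sub>M I (\<lambda>_. borel))"
  shows "(\<integral>x. h (\<lambda>i\<in>I. s i * g i x) \<partial>M) = (\<integral>x. h (\<lambda>i\<in>I. g i x) \<partial>M)"
    and "integrable M (\<lambda>x. h (\<lambda>i\<in>I. s i * g i x)) \<longleftrightarrow> integrable M (\<lambda>x. h (\<lambda>i\<in>I. g i x))"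
proof -
  have "(\<integral>x. h (\<lambda>i\<in>I. s i * g i x) \<partial>M) = (\<integral>x. h (\<lambda>i\<in>I. g i x) \<partial>M) \<and>
      (integrable M (\<lambda>x. h (\<lambda>i\<in>I. s i * g i x)) \<longleftrightarrow> integrable M (\<lambda>x. h (\<lambda>i\<in>I. g i x)))"
  proof (cases "I = {}")
    case False
    have g_meas: "g i \<in> borel_measurable M" if "i \<in> I" for i
      using distributed_measurable[OF normal[rule_format, OF that]] by simp
    have meas_s: "(\<lambda>x. \<lambda>i\<in>I. s i * g i x) \<in> measurable M (Pi\<^sub>M I (\<lambda>_. borel))"
      and meas: "(\<lambda>x. \<lambda>i\<in>I. g i x) \<in> measurable M (Pi\<^sub>M I (\<lambda>_. borel))"
      using g_meas by (auto intro!: measurable_restrict)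
    have "distr M (Pi\<^sub>M I (\<lambda>_. borel)) (\<lambda>x. \<lambda>i\<in>I. s i * g i x) = distr M (Pi\<^sub>M I (\<lambda>_. borel)) (\<lambda>x. \<lambda>i\<in>I. g i x)"
      using distr_sign_change_std_normal[OF False indep normal sign]
        distr_sign_change_std_normal[OF False indep normal, of "\<lambda>_. 1"] by simp
    then show ?thesis
      using integral_distr[OF meas_s h] integral_distr[OF meas h]
        integrable_distr_eq[OF meas_s h] integrable_distr_eq[OF meas h] by simp
  qed (simp add: restrict_def)
  then show "(\<integral>x. h (\<lambda>i\<in>I. s i * g i x) \<partial>M) = (\<integral>x. h (\<lambda>i\<in>I. g i x) \<partial>M)"
    and "integrable M (\<lambda>x. h (\<lambda>i\<in>I. s i * g i x)) \<longleftrightarrow> integrable M (\<lambda>x. h (\<lambda>i\<in>I. g i x))"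
    by auto
qed

lemma integrable_std_normal_abs_powr:
  assumes normal: "distributed M lborel X std_normal_density" and "q \<ge> 0"
  shows "integrable M (\<lambda>x. \<bar>X x\<bar> powr q)"
proof -
  define m where "m = nat \<lceil>q\<rceil>"
  have "integrable lborel (\<lambda>y. std_normal_density y * y ^ (2 * k))" for k
    using std_normal_moment_even[of k] by (rule integrable.intros)
  from Bochner_Integration.integrable_add[OF this[of 0] this[of m]]
  have "integrable lborel (\<lambda>y. std_normal_density y * (1 + y ^ (2 * m)))"
    by (simp add: distrib_left)
  then have "integrable lborel (\<lambda>y. std_normal_density y * \<bar>y\<bar> powr q)"
    by (rule Bochner_Integration.integrable_bound)
      (use \<open>q \<ge> 0\<close> in \<open>auto simp: m_def abs_mult intro!: mult_left_mono abs_powr_le_one_plus_even_power\<close>)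
  then show ?thesis
    using distributed_integrable[OF normal, of "\<lambda>y. \<bar>y\<bar> powr q"] by simp
qed

lemma integrable_norm_powr_quadratic_growth:
  fixes g :: "'i \<Rightarrow> 'a \<Rightarrow> real" and f :: "('i \<Rightarrow> real) \<Rightarrow> 'c::real_normed_vector"
  assumes "finite I" and normal: "\<forall>i\<in>I. distributed M lborel (g i) std_normal_density"
    and p: "p \<ge> 1"
    and f_meas: "(\<lambda>y. norm (f y)) \<in> borel_measurable (Pi\<^sub>M I (\<lambda>_. borel))"
    and growth: "\<And>y. norm (f y) \<le> K * (1 + (\<Sum>i\<in>I. (y i)\<^sup>2))"
  shows "integrable M (\<lambda>x. norm (f (\<lambda>i\<in>I. g i x)) powr p)"
proof -
  define C where "C = K powr p * (card I + 1) powr (p - 1)"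
  have "K \<ge> 0"
    using order_trans[OF norm_ge_zero growth[of "\<lambda>_. 0"]] by simp
  have bound: "norm (f y) powr p \<le> C * (1 + (\<Sum>i\<in>I. \<bar>y i\<bar> powr (2 * p)))" for y
  proof -
    have "norm (f y) powr p \<le> K powr p * (1 + (\<Sum>i\<in>I. (y i)\<^sup>2)) powr p"
      using growth[of y] p \<open>K \<ge> 0\<close> by (simp add: powr_mono2 sum_nonneg flip: powr_mult)
    also have "\<dots> \<le> C * (1 + (\<Sum>i\<in>I. ((y i)\<^sup>2) powr p))"
      unfolding C_def mult.assoc
      using one_plus_sum_powr_le[OF \<open>finite I\<close> p, of "\<lambda>i. (y i)\<^sup>2"] by (simp add: mult_left_mono)
    finally have "norm (f y) powr p \<le> C * (1 + (\<Sum>i\<in>I. ((y i)\<^sup>2) powr p))" .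
    moreover have "((y i)\<^sup>2) powr p = \<bar>y i\<bar> powr (2 * p)" for i
    proof -
      have "(y i)\<^sup>2 = \<bar>y i\<bar> powr 2"
        by simp
      then show ?thesis
        by (simp only: powr_powr)
    qed
    ultimately show ?thesis
      by simp
  qed
  have g_meas: "(\<lambda>x. \<lambda>i\<in>I. g i x) \<in> measurable M (Pi\<^sub>M I (\<lambda>_. borel))"
    using distributed_measurable normal by (intro measurable_restrict) fastforce
  show ?thesis
  proof (rule Bochner_Integration.integrable_bound)
    show "integrable M (\<lambda>x. C * (1 + (\<Sum>i\<in>I. \<bar>g i x\<bar> powr (2 * p))))"
      using normal p by (intro Bochner_Integration.integrable_mult_right Bochner_Integration.integrable_add
          Bochner_Integration.integrable_sum integrable_const
          integrable_std_normal_abs_powr) auto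
    show "(\<lambda>x. norm (f (\<lambda>i\<in>I. g i x)) powr p) \<in> borel_measurable M"
      using measurable_comp[OF g_meas f_meas] by (simp add: comp_def)
    show "AE x in M. norm (norm (f (\<lambda>i\<in>I. g i x)) powr p) \<le> norm (C * (1 + (\<Sum>i\<in>I. \<bar>g i x\<bar> powr (2 * p))))"
    proof (rule AE_I2)
      fix x
      have "norm (f (\<lambda>i\<in>I. g i x)) powr p \<le> C * (1 + (\<Sum>i\<in>I. \<bar>g i x\<bar> powr (2 * p)))"
        using bound[of "\<lambda>i\<in>I. g i x"] by simp
      then show "norm (norm (f (\<lambda>i\<in>I. g i x)) powr p) \<le> norm (C * (1 + (\<Sum>i\<in>I. \<bar>g i x\<bar> powr (2 * p))))"
        by simp
    qed
  qed
qed

lemma integrable_norm_wick_form_powr: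
  fixes g :: "'i::countable \<Rightarrow> 'a \<Rightarrow> real"
  assumes "finite I" "\<forall>i\<in>I. distributed M lborel (g i) std_normal_density" "p \<ge> 1"
  shows "integrable M (\<lambda>x. norm (wick_form I b (\<lambda>i. g i x)) powr p)"
  using integrable_norm_powr_quadratic_growth[OF assms norm_wick_form_measurable norm_wick_form_le[OF assms(1)]]
  unfolding wick_form_restrict .

lemma Lp_norm_wick_form_diagonal_part_le:
  fixes g :: "'i::countable \<Rightarrow> 'a \<Rightarrow> real"
  assumes "finite I" and indep: "indep_vars (\<lambda>_. borel) g I"
    and normal: "\<forall>i\<in>I. distributed M lborel (g i) std_normal_density" and p: "p \<ge> 1"
  shows "Lp_norm M p (\<lambda>x. wick_form I (diagonal_part b) (\<lambda>i. g i x)) \<le> Lp_norm M p (\<lambda>x. wick_form I b (\<lambda>i. g i x))"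
proof (rule Lp_norm_mono_integral)
  have h_meas: "(\<lambda>y. norm (wick_form I b y) powr p) \<in> borel_measurable (Pi\<^sub>M I (\<lambda>_. borel))"
    using norm_wick_form_measurable[of I b] by simp
  have sign: "\<forall>i\<in>I. \<bar>sign_flip A i\<bar> = 1" for A
    by (simp add: sign_flip_def)
  have integrable: "integrable M (\<lambda>x. norm (wick_form I c (\<lambda>i. g i x)) powr p)" for c
    using integrable_norm_wick_form_powr[OF \<open>finite I\<close> normal p] .
  have flip_integral: "(\<integral>x. norm (wick_form I b (\<lambda>i. sign_flip A i * g i x)) powr p \<partial>M)
      = (\<integral>x. norm (wick_form I b (\<lambda>i. g i x)) powr p \<partial>M)"
    and flip_integrable: "integrable M (\<lambda>x. norm (wick_form I b (\<lambda>i. sign_flip A i * g i x)) powr p)" for A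
    using integral_sign_change_std_normal[OF indep normal sign h_meas] integrable
    unfolding wick_form_restrict by auto
  have "(\<integral>x. norm (wick_form I (diagonal_part b) (\<lambda>i. g i x)) powr p \<partial>M)
      \<le> (\<integral>x. (\<Sum>A\<in>Pow I. norm (wick_form I b (\<lambda>i. sign_flip A i * g i x)) powr p) / 2 ^ card I \<partial>M)"
    using integrable flip_integrable norm_wick_form_diagonal_part_powr_le[OF \<open>finite I\<close> p]
    by (intro integral_mono) auto
  also have "\<dots> = (\<Sum>A\<in>Pow I. \<integral>x. norm (wick_form I b (\<lambda>i. sign_flip A i * g i x)) powr p \<partial>M) / 2 ^ card I"
    using flip_integrable by simp
  also have "\<dots> = (\<integral>x. norm (wick_form I b (\<lambda>i. g i x)) powr p \<partial>M)"
    using \<open>finite I\<close> by (simp add: flip_integral card_Pow)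
  finally show "(\<integral>x. norm (wick_form I (diagonal_part b) (\<lambda>i. g i x)) powr p \<partial>M)
      \<le> (\<integral>x. norm (wick_form I b (\<lambda>i. g i x)) powr p \<partial>M)" .
qed (use p in simp)

lemma Lp_norm_wick_form_decoupling:
  fixes g :: "'i::countable \<Rightarrow> 'a \<Rightarrow> real" and b :: "'i \<Rightarrow> 'i \<Rightarrow> 'c::real_normed_vector"
  assumes "finite I" and indep: "indep_vars (\<lambda>_. borel) g I"
    and normal: "\<forall>i\<in>I. distributed M lborel (g i) std_normal_density" and p: "p \<ge> 1"
  defines "Q \<equiv> \<lambda>x. wick_form I b (\<lambda>i. g i x)"
    and "Q_off \<equiv> \<lambda>x. wick_form I (off_diagonal_part b) (\<lambda>i. g i x)"
    and "Q_diag \<equiv> \<lambda>x. wick_form I (diagonal_part b) (\<lambda>i. g i x)"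
  shows "Lp_norm M p Q \<le> Lp_norm M p Q_off + Lp_norm M p Q_diag"
    and "Lp_norm M p Q_off + Lp_norm M p Q_diag \<le> 3 * Lp_norm M p Q"
proof -
  have int_Q: "integrable M (\<lambda>x. norm (Q x) powr p)"
    and int_Q_off: "integrable M (\<lambda>x. norm (Q_off x) powr p)"
    and int_Q_diag: "integrable M (\<lambda>x. norm (Q_diag x) powr p)"
    unfolding Q_def Q_off_def Q_diag_def using integrable_norm_wick_form_powr[OF \<open>finite I\<close> normal p] by auto
  have Q_eq: "Q = (\<lambda>x. Q_off x + Q_diag x)" and Q_off_eq: "Q_off = (\<lambda>x. Q x - Q_diag x)"
    unfolding Q_def Q_off_def Q_diag_def by (simp_all add: wick_form_split[of I b])
  show "Lp_norm M p Q \<le> Lp_norm M p Q_off + Lp_norm M p Q_diag"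
    using Lp_norm_add_le[OF p int_Q_off int_Q_diag] int_Q unfolding Q_eq by simp
  have "Lp_norm M p Q_off \<le> Lp_norm M p Q + Lp_norm M p Q_diag"
    using Lp_norm_diff_le[OF p int_Q int_Q_diag] int_Q_off unfolding Q_off_eq by simp
  moreover have "Lp_norm M p Q_diag \<le> Lp_norm M p Q"
    unfolding Q_def Q_diag_def using Lp_norm_wick_form_diagonal_part_le[OF assms(1-4)] .
  ultimately show "Lp_norm M p Q_off + Lp_norm M p Q_diag \<le> 3 * Lp_norm M p Q"
    by linarith
qed

end

theorem lemma3p1:
  fixes M :: "'b measure" and a :: "nat \<Rightarrow> nat \<Rightarrow> 'a::real_normed_vector"
    and g :: "nat \<Rightarrow> 'b \<Rightarrow> real" and n :: nat and p :: real
  assumes "prob_space M"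
    and "\<forall>i\<in>{1..n}. \<forall>j\<in>{1..n}. a i j = a j i"
    and "prob_space.indep_vars M (\<lambda>_. borel) g {1..n}"
    and "\<forall>i\<in>{1..n}. distributed M lborel (g i) std_normal_density"
    and "p \<ge> 1"
  defines "W \<equiv> Lp_norm M p (\<lambda>x. \<Sum>i\<in>{1..n}. \<Sum>j\<in>{1..n} - {i}. (g i x * g j x) *\<^sub>R a i j)
              + Lp_norm M p (\<lambda>x. \<Sum>i\<in>{1..n}. (g i x ^ 2 - 1) *\<^sub>R a i i)"
  shows "W / 3 \<le> Lp_norm M p (\<lambda>x. \<Sum>i\<in>{1..n}. \<Sum>j\<in>{1..n}. (g i x * g j x - (if i = j then 1 else 0)) *\<^sub>R a i j)
       \<and> Lp_norm M p (\<lambda>x. \<Sum>i\<in>{1..n}. \<Sum>j\<in>{1..n}. (g i x * g j x - (if i = j then 1 else 0)) *\<^sub>R a i j) \<le> W"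
proof -
  interpret prob_space M by fact
  have "finite {1..n}"
    by simp
  from Lp_norm_wick_form_decoupling[OF this assms(3-5), of a]
  show ?thesis
    unfolding W_def wick_form_off_diagonal_part[OF \<open>finite {1..n}\<close>] wick_form_diagonal_part[OF \<open>finite {1..n}\<close>]
    unfolding wick_form_def by auto
qed

end
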